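(* Let sampling data $\{(\mathrm{i}\omega_i, H_i)\}_{i=1}^{N}$ be given, with $\omega_i \in \mathbb{R}$ and $H_i \in \mathbb{C}^{n_o \times n_i}$, closed under conjugation (if $\mathrm{i}\omega_k$ is a sampling frequency then so is $-\mathrm{i}\omega_k$, and the datum at $-\mathrm{i}\omega_k$ is $\overline{H_k}$), and weights $\rho_i > 0$ that are equal for complex conjugate pairs of sampling frequencies. For real matrices $\hat{E}, \hat{A} \in \mathbb{R}^{r\times r}$, $\hat{B} \in \mathbb{R}^{r \times n_i}$, $\hat{C} \in \mathbb{R}^{n_o \times r}$ let $\hat{H}(s) = \hat{C}(s\hat{E} - \hat{A})^{-1}\hat{B}$ and $\mathcal{J}(\hat{H}) = \sum_{i=1}^{N} \rho_i \|H_i - \hat{H}(\mathrm{i}\omega_i)\|_F^2$. Let $\hat{H}$ have the pole-residue form $\hat{H}(s) = \sum_{j=1}^{r} \frac{c_j b_j^{*}}{s - \lambda_j}$ with pairwise distinct poles $\lambda_j$ (where $c_j = \hat{C}\hat{T}e_j$, $b_j = \hat{B}^{T}\hat{S}e_j$ for invertible $\hat{T},\hat{S} \in \mathbb{C}^{r\times r}$ with $\hat{S}^*\hat{E}\hat{T} = I$ and $\hat{S}^*\hat{A}\hat{T} = \operatorname{diag}(\lambda_1,\dots,\lambda_r)$), and let $\hat{H}$ be a local minimum of $\mathcal{J}$. Then for $k = 1, \dots, r$: \begin{align*} \sum_{i=1}^{N} \rho_i \frac{H_i b_k}{-\mathrm{i}\omega_i - \overline{\lambda_k}} &= \sum_{i=1}^{N}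 \rho_i \frac{\hat{H}(\mathrm{i}\omega_i) b_k}{-\mathrm{i}\omega_i - \overline{\lambda_k}},\\ \sum_{i=1}^{N} \rho_i \frac{c_k^{*} H_i}{-\mathrm{i}\omega_i - \overline{\lambda_k}} &= \sum_{i=1}^{N} \rho_i \frac{c_k^{*} \hat{H}(\mathrm{i}\omega_i)}{-\mathrm{i}\omega_i - \overline{\lambda_k}},\\ \sum_{i=1}^{N} \rho_i \frac{c_k^{*} H_i b_k}{(-\mathrm{i}\omega_i - \overline{\lambda_k})^2} &= \sum_{i=1}^{N} \rho_i \frac{c_k^{*} \hat{H}(\mathrm{i}\omega_i) b_k}{(-\mathrm{i}\omega_i - \overline{\lambda_k})^2}. \end{align*}
   Context: $\|\cdot\|_F$ is the Frobenius norm, $(\cdot)^*$ the conjugate transpose, $e_j$ the $j$th standard unit vector. The local minimum is with respect to the real matrices $\hat{E},\hat{A},\hat{B},\hat{C}$ (with $r$ fixed), among those for which $\hat{E}$ is invertible and $\mathrm{i}\omega_i\hat{E} - \hat{A}$ is invertible for all sampling frequencies. *)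

theory Defs
  imports "HOL-Analysis.Analysis"
begin

definition cmat :: "real^'n^'m \<Rightarrow> complex^'n^'m" where
  "cmat M = (\<chi> i j. complex_of_real (M$i$j))"

definition cvconj :: "complex^'n \<Rightarrow> complex^'n" where
  "cvconj v = (\<chi> i. cnj (v$i))"

definition cmconj :: "complex^'n^'m \<Rightarrow> complex^'n^'m" where
  "cmconj M = (\<chi> i j. cnj (M$i$j))"

definition ctrans :: "complex^'n^'m \<Rightarrow> complex^'m^'n" where
  "ctrans M = transpose (cmconj M)"

definition cdot :: "complex^'n \<Rightarrow> complex^'n \<Rightarrow> complex" where
  "cdot x y = (\<Sum>i\<in>UNIV. cnj (x$i) * y$i)"

definition pencil :: "complex \<Rightarrow> real^'r^'r \<Rightarrow> real^'r^'r \<Rightarrow> complex^'r^'r" where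
  "pencil s E A = (\<chi> i j. s * complex_of_real (E$i$j) - complex_of_real (A$i$j))"

definition tf :: "real^'r^'r \<Rightarrow> real^'r^'r \<Rightarrow> real^'ni^'r \<Rightarrow> real^'r^'no
                  \<Rightarrow> complex \<Rightarrow> complex^'ni^'no" where
  "tf E A B C s = cmat C ** matrix_inv (pencil s E A) ** cmat B"

definition frob2 :: "complex^'n^'m \<Rightarrow> real" where
  "frob2 M = (\<Sum>i\<in>UNIV. \<Sum>j\<in>UNIV. (cmod (M$i$j))\<^sup>2)"

definition lsq_obj :: "nat \<Rightarrow> (nat \<Rightarrow> real) \<Rightarrow> (nat \<Rightarrow> real) \<Rightarrow> (nat \<Rightarrow> complex^'ni^'no)
     \<Rightarrow> real^'r^'r \<Rightarrow> real^'r^'r \<Rightarrow> real^'ni^'r \<Rightarrow> real^'r^'no \<Rightarrow> real" where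
  "lsq_obj N \<rho> \<omega> Hd E A B C =
     (\<Sum>i<N. \<rho> i * frob2 (Hd i - tf E A B C (\<i> * complex_of_real (\<omega> i))))"

definition admissible :: "nat \<Rightarrow> (nat \<Rightarrow> real) \<Rightarrow> real^'r^'r \<Rightarrow> real^'r^'r \<Rightarrow> bool" where
  "admissible N \<omega> E A \<longleftrightarrow> invertible E \<and>
     (\<forall>i<N. invertible (pencil (\<i> * complex_of_real (\<omega> i)) E A))"

end

theory Submission
  imports Defs
begin

text \<open>
  At a local minimum the derivative of J vanishes along the real rank-one perturbations
  B + t u v^T, C + t u v^T and A + t u v^T of the realization; along the last one the transfer
  function is explicit by the Sherman-Morrison formula. Each derivative is -2 times the real part
  of a bilinear form in (u, v) built from the residuals H_i - Hhat(i w_i) and the resolvents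
  (i w_i E - A)^-1. Since data and weights are closed under conjugation, the form is real on real
  vectors, so it vanishes there, and by bilinearity it vanishes on complex vectors as well.
  On right and left eigenvectors of the pencil the resolvent acts as multiplication by
  1/(i w_i - lambda_k), and evaluating the three forms there gives the three interpolation
  conditions.
\<close>

definition outer :: "'a::times^'m \<Rightarrow> 'a^'n \<Rightarrow> 'a^'n^'m" where
  "outer x y = (\<chi> i j. x$i * y$j)"

definition cvec :: "real^'n \<Rightarrow> complex^'n" where
  "cvec u = (\<chi> i. complex_of_real (u$i))"

definition frob_inner :: "complex^'n^'m \<Rightarrow> complex^'n^'m \<Rightarrow> complex" where
  "frob_inner X Y = (\<Sum>a\<in>UNIV. \<Sum>b\<in>UNIV. cnj (X$a$b) * Y$a$b)"

section \<open>Matrix algebra\<close>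

lemma matrix_inv_right:
  assumes "invertible M"
  shows "M ** matrix_inv M = mat 1"
  using someI_ex[OF assms[unfolded invertible_def]] unfolding matrix_inv_def by auto

lemma matrix_inv_left:
  assumes "invertible M"
  shows "matrix_inv M ** M = mat 1"
  using someI_ex[OF assms[unfolded invertible_def]] unfolding matrix_inv_def by auto

lemma matrix_inv_eq_right_inverse:
  fixes M :: "'a::field^'n^'n"
  assumes "M ** X = mat 1"
  shows "matrix_inv M = X"
proof -
  have "invertible M"
    using assms invertible_right_inverse by blast
  then have "matrix_inv M = matrix_inv M ** (M ** X)"
    using assms by simp
  also have "\<dots> = X"
    by (simp add: matrix_mul_assoc matrix_inv_left[OF \<open>invertible M\<close>])
  finally show ?thesis .
qed

lemma matrix_inv_mult_vector_eigen:
  fixes P :: "'a::field^'n^'n"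
  assumes "invertible P" and "P *v x = c *s z" and "x \<noteq> 0"
  shows "matrix_inv P *v z = (1 / c) *s x"
proof -
  have "x = matrix_inv P *v (P *v x)"
    by (simp add: matrix_vector_mul_assoc matrix_inv_left[OF assms(1)])
  then have x: "x = c *s (matrix_inv P *v z)"
    by (simp add: assms(2) vector_scalar_commute)
  with \<open>x \<noteq> 0\<close> have "c \<noteq> 0"
    by auto
  with x show ?thesis
    by (simp add: vector_smult_assoc)
qed

lemma vector_mult_matrix_inv_eigen:
  fixes P :: "'a::field^'n^'n"
  assumes "invertible P" and "y v* P = c *s z" and "y \<noteq> 0"
  shows "z v* matrix_inv P = (1 / c) *s y"
proof -
  have "y = (y v* P) v* matrix_inv P"
    by (simp add: vector_matrix_mul_assoc matrix_inv_right[OF assms(1)])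
  then have y: "y = c *s (z v* matrix_inv P)"
    by (simp add: assms(2) scalar_vector_matrix_assoc)
  with \<open>y \<noteq> 0\<close> have "c \<noteq> 0"
    by auto
  with y show ?thesis
    by (simp add: vector_smult_assoc)
qed

lemma matrix_vector_mult_axis: "(M::'a::comm_ring_1^'n^'m) *v axis k 1 = column k M"
proof -
  have "(\<Sum>j\<in>UNIV. M$i$j * axis k 1 $ j) = (\<Sum>j\<in>UNIV. if j = k then M$i$j else 0)" for i
    by (rule sum.cong) (auto simp: axis_def)
  then show ?thesis
    by (simp add: vec_eq_iff matrix_vector_mult_def column_def)
qed

lemma axis_vector_matrix_mult: "axis k 1 v* (M::'a::comm_ring_1^'n^'m) = M $ k"
proof -
  have "(\<Sum>i\<in>UNIV. axis k 1 $ i * M$i$j) = (\<Sum>i\<in>UNIV. if i = k then M$i$j else 0)" for j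
    by (rule sum.cong) (auto simp: axis_def)
  then show ?thesis
    by (simp add: vec_eq_iff vector_matrix_mult_def)
qed

lemma diagonal_mult_axis:
  "(\<chi> i j. if i = j then lam i else 0) *v axis k 1 = lam k *s axis k (1::'a::comm_ring_1)"
  unfolding matrix_vector_mult_axis by (simp add: column_def vec_eq_iff axis_def)

lemma axis_mult_diagonal:
  "axis k 1 v* (\<chi> i j. if i = j then lam i else 0) = lam k *s axis k (1::'a::comm_ring_1)"
  unfolding axis_vector_matrix_mult by (simp add: vec_eq_iff axis_def)

lemma vector_matrix_mult_cancel:
  fixes T :: "'a::field^'n^'n"
  assumes "invertible T" and "x v* T = y v* T"
  shows "x = y"
  by (metis assms vector_matrix_mul_assoc matrix_inv_right vector_matrix_mul_rid)

lemma simultaneous_diagonalization_eigenvectors: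
  fixes W Em Am T :: "'a::field^'n^'n"
  assumes WET: "W ** Em ** T = mat 1"
    and WAT: "W ** Am ** T = (\<chi> i j. if i = j then lam i else 0)"
  shows "Am *v column k T = lam k *s (Em *v column k T)"
    and "W $ k v* Am = lam k *s (W $ k v* Em)"
    and "column k T \<noteq> 0"
    and "W $ k \<noteq> 0"
proof -
  have "invertible W"
    using WET invertible_right_inverse by (metis matrix_mul_assoc)
  have "invertible T"
    using WET invertible_left_inverse by blast
  have col: "M *v column k T = (M ** T) *v axis k 1" for M :: "'a^'n^'n"
    by (simp flip: matrix_vector_mult_axis add: matrix_vector_mul_assoc)
  have row: "W $ k v* M = axis k 1 v* (W ** M)" for M :: "'a^'n^'n"
    by (simp flip: axis_vector_matrix_mult add: vector_matrix_mul_assoc)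
  have "W *v (Am *v column k T) = W *v (lam k *s (Em *v column k T))"
    by (simp add: col matrix_vector_mul_assoc vector_scalar_commute matrix_mul_assoc
        WET WAT diagonal_mult_axis)
  then show "Am *v column k T = lam k *s (Em *v column k T)"
    using inj_matrix_vector_mult[OF \<open>invertible W\<close>] by (simp add: inj_eq)
  have "(W $ k v* Am) v* T = (lam k *s (W $ k v* Em)) v* T"
    by (simp add: row vector_matrix_mul_assoc scalar_vector_matrix_assoc matrix_mul_assoc
        WET WAT axis_mult_diagonal)
  then show "W $ k v* Am = lam k *s (W $ k v* Em)"
    using vector_matrix_mult_cancel[OF \<open>invertible T\<close>] by blast
  have "(W ** Em) *v column k T = axis k 1"
    by (simp add: col WET)
  then show "column k T \<noteq> 0"
    by auto
  have "W $ k v* (Em ** T) = axis k 1"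
    by (simp add: row WET matrix_mul_assoc)
  then show "W $ k \<noteq> 0"
    by auto
qed

lemma matrix_add_rdistrib: "((A::'a::semiring_1^'n^'m) + B) ** C = A ** C + B ** C"
  by (simp add: vec_eq_iff matrix_matrix_mult_def sum.distrib algebra_simps)

lemma matrix_diff_rdistrib: "((A::'a::ring_1^'n^'m) - B) ** C = A ** C - B ** C"
  by (simp add: vec_eq_iff matrix_matrix_mult_def sum_subtractf algebra_simps)

lemma cmconj_mult: "cmconj (X ** Y) = cmconj X ** cmconj Y"
  by (simp add: cmconj_def matrix_matrix_mult_def vec_eq_iff)

lemma cmconj_mat_1 [simp]: "cmconj (mat 1) = (mat 1 :: complex^'n^'n)"
  by (simp add: cmconj_def mat_def vec_eq_iff)

lemma cmconj_cmat [simp]: "cmconj (cmat M) = cmat M"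
  by (simp add: cmconj_def cmat_def vec_eq_iff)

lemma cmconj_diff: "cmconj (X - Y) = cmconj X - cmconj Y"
  by (simp add: cmconj_def vec_eq_iff)

lemma cmconj_matrix_inv:
  fixes M :: "complex^'n^'n"
  assumes "invertible M"
  shows "cmconj (matrix_inv M) = matrix_inv (cmconj M)"
proof -
  have "cmconj M ** cmconj (matrix_inv M) = mat 1"
    by (simp add: matrix_inv_right[OF assms] flip: cmconj_mult)
  then show ?thesis
    by (simp add: matrix_inv_eq_right_inverse)
qed

lemma cvconj_matrix_vector_mult: "cvconj (M *v x) = cmconj M *v cvconj x"
  by (simp add: cmconj_def cvconj_def matrix_vector_mult_def vec_eq_iff)

lemma cvconj_vector_matrix_mult: "cvconj (x v* M) = cvconj x v* cmconj M"
  by (simp add: cmconj_def cvconj_def vector_matrix_mult_def vec_eq_iff)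

lemma cvconj_cvec [simp]: "cvconj (cvec u) = cvec u"
  by (simp add: cvconj_def cvec_def vec_eq_iff)

lemma cmconj_outer: "cmconj (outer x y) = outer (cvconj x) (cvconj y)"
  by (simp add: cmconj_def cvconj_def outer_def vec_eq_iff)

lemma cnj_frob_inner: "cnj (frob_inner X Y) = frob_inner (cmconj X) (cmconj Y)"
  by (simp add: frob_inner_def cmconj_def)

lemma pencil_cnj: "pencil (cnj s) E A = cmconj (pencil s E A)"
  by (simp add: pencil_def cmconj_def vec_eq_iff)

lemma tf_cnj:
  assumes "invertible (pencil s E A)"
  shows "tf E A B C (cnj s) = cmconj (tf E A B C s)"
  by (simp add: tf_def cmconj_mult pencil_cnj cmconj_matrix_inv[OF assms])

lemma cmat_outer: "cmat (outer u v) = outer (cvec u) (cvec v)"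
  by (simp add: cmat_def outer_def cvec_def vec_eq_iff)

lemma cmat_add_scaleR: "cmat (X + t *\<^sub>R Y) = cmat X + t *\<^sub>R cmat Y"
  by (simp add: cmat_def vec_eq_iff scaleR_conv_of_real[where 'a=complex])

lemma matrix_mult_outer: "M ** outer x y = outer (M *v x) y"
  by (simp add: outer_def matrix_matrix_mult_def matrix_vector_mult_def vec_eq_iff
      sum_distrib_right mult_ac)

lemma outer_mult_matrix: "outer x y ** M = outer x (y v* M)"
  by (simp add: outer_def matrix_matrix_mult_def vector_matrix_mult_def vec_eq_iff
      sum_distrib_left mult_ac)

lemma vector_mult_outer: "w v* outer x y = (\<Sum>j\<in>UNIV. w$j * x$j) *s y"
  by (simp add: outer_def vector_matrix_mult_def vec_eq_iff sum_distrib_right mult_ac)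

lemma outer_scaleR: "outer (t *\<^sub>R x) y = t *\<^sub>R outer x (y::complex^'n)"
  by (simp add: outer_def vec_eq_iff scaleR_conv_of_real[where 'a=complex])

lemma scaleR_complex_vec: "t *\<^sub>R (x::complex^'n) = complex_of_real t *s x"
  by (simp add: vec_eq_iff scaleR_conv_of_real[where 'a=complex])

lemma scaleR_matrix_vector_mult: "(t *\<^sub>R M) *v x = t *\<^sub>R (M *v x :: complex^'m)"
  by (simp add: vec_eq_iff matrix_vector_mult_def scaleR_conv_of_real[where 'a=complex]
      sum_distrib_left mult_ac)

lemma frob2_diff_scaleR:
  "frob2 (R - t *\<^sub>R Q) = frob2 R - 2 * t * Re (frob_inner R Q) + t\<^sup>2 * frob2 Q"
proof -
  have "(cmod (z - t *\<^sub>R w))\<^sup>2 = (cmod z)\<^sup>2 - 2 * t * Re (cnj z * w) + t\<^sup>2 * (cmod w)\<^sup>2"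
    for z w :: complex
    unfolding cmod_power2
    by (simp add: scaleR_conv_of_real[where 'a=complex] power2_eq_square algebra_simps)
  then show ?thesis
    by (simp add: frob2_def frob_inner_def sum.distrib sum_subtractf sum_distrib_left ring_distribs)
qed

lemma frob_inner_outer_axis_left:
  "frob_inner R (outer (axis j 1) (a *s cvconj q)) = a * cnj ((R *v q) $ j)"
proof -
  have "frob_inner R (outer (axis j 1) (a *s cvconj q))
      = (\<Sum>x\<in>UNIV. if x = j then (\<Sum>y\<in>UNIV. cnj (R$x$y) * (a * cnj (q$y))) else 0)"
    unfolding frob_inner_def outer_def by (intro sum.cong) (auto simp: axis_def cvconj_def)
  then show ?thesis
    by (simp add: matrix_vector_mult_def sum_distrib_left mult_ac)
qed

lemma frob_inner_outer_axis_right: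
  "frob_inner R (outer (a *s p) (axis j 1)) = a * cnj ((cvconj p v* R) $ j)"
proof -
  have "frob_inner R (outer (a *s p) (axis j 1))
      = (\<Sum>x\<in>UNIV. \<Sum>y\<in>UNIV. if y = j then cnj (R$x$y) * (a * p$x) else 0)"
    unfolding frob_inner_def outer_def by (intro sum.cong) (auto simp: axis_def)
  then show ?thesis
    by (simp add: vector_matrix_mult_def sum_distrib_left mult_ac cvconj_def)
qed

lemma frob_inner_outer:
  "frob_inner R (outer (a *s p) (a' *s cvconj q)) = a * a' * cnj (cdot p (R *v q))"
  unfolding frob_inner_def outer_def cdot_def cvconj_def matrix_vector_mult_def
  by (simp add: sum_distrib_left cnj_sum) (simp add: mult_ac)

lemma outer_add_left: "outer (x + y) z = outer x z + outer y (z::'a::semiring_0^'n)"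
  by (simp add: outer_def vec_eq_iff distrib_right)

lemma outer_add_right: "outer (x::'a::semiring_0^'m) (y + z) = outer x y + outer x z"
  by (simp add: outer_def vec_eq_iff distrib_left)

lemma frob_inner_add: "frob_inner R (X + Y) = frob_inner R X + frob_inner R Y"
  by (simp add: frob_inner_def distrib_left sum.distrib)

lemma frob_inner_outer_smult_left: "frob_inner R (outer (c *s x) y) = c * frob_inner R (outer x y)"
  by (simp add: frob_inner_def outer_def sum_distrib_left mult_ac)

lemma frob_inner_outer_smult_right: "frob_inner R (outer x (c *s y)) = c * frob_inner R (outer x y)"
  by (simp add: frob_inner_def outer_def sum_distrib_left mult_ac)

lemma pencil_mult_vector: "pencil s E A *v x = s *s (cmat E *v x) - cmat A *v x"
  by (simp add: vec_eq_iff matrix_vector_mult_def pencil_def cmat_def sum_subtractf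
      sum_distrib_left algebra_simps)

lemma vector_mult_pencil: "x v* pencil s E A = s *s (x v* cmat E) - x v* cmat A"
  by (simp add: vec_eq_iff vector_matrix_mult_def pencil_def cmat_def sum_subtractf
      sum_distrib_left algebra_simps)

lemma ctrans_nth: "ctrans S $ k = cvconj (column k S)"
  by (simp add: ctrans_def transpose_def cmconj_def cvconj_def column_def vec_eq_iff)

section \<open>Rank-one perturbations of the transfer function\<close>

lemma sherman_morrison:
  fixes P K :: "'a::field^'n^'n" and x w :: "'a^'n"
  defines "\<alpha> \<equiv> (\<Sum>j\<in>UNIV. w$j * (K *v x)$j)"
  assumes PK: "P ** K = mat 1" and "\<alpha> \<noteq> 1"
  shows "(P - outer x w) ** (K + outer ((1 / (1 - \<alpha>)) *s (K *v x)) (w v* K)) = mat 1"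
proof -
  define c where "c = 1 / (1 - \<alpha>)"
  have c: "c * \<alpha> = c - 1"
    using \<open>\<alpha> \<noteq> 1\<close> by (simp add: c_def field_simps)
  have PKx: "P *v (K *v x) = x"
    by (simp add: matrix_vector_mul_assoc PK)
  have "(P - outer x w) ** (K + outer (c *s (K *v x)) (w v* K))
      = P ** K + P ** outer (c *s (K *v x)) (w v* K)
        - outer x w ** K - outer x w ** outer (c *s (K *v x)) (w v* K)"
    by (simp add: matrix_diff_rdistrib matrix_add_ldistrib)
  also have "\<dots> = mat 1 + outer (c *s x) (w v* K) - outer x (w v* K)
        - outer x ((c * \<alpha>) *s (w v* K))"
  proof -
    have "outer x w ** outer (c *s (K *v x)) (w v* K) = outer x ((c * \<alpha>) *s (w v* K))"
      by (simp add: outer_mult_matrix vector_mult_outer \<alpha>_def sum_distrib_left mult_ac)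
    then show ?thesis
      by (simp add: PK PKx matrix_mult_outer outer_mult_matrix vector_scalar_commute)
  qed
  also have "\<dots> = mat 1"
    unfolding c by (simp add: outer_def vec_eq_iff algebra_simps)
  finally show ?thesis
    by (simp add: c_def)
qed

lemma tf_perturb_B:
  "tf E A (B + t *\<^sub>R outer u v) C s
     = tf E A B C s + t *\<^sub>R outer (cmat C ** matrix_inv (pencil s E A) *v cvec u) (cvec v)"
  unfolding tf_def cmat_add_scaleR cmat_outer matrix_add_ldistrib matrix_scalar_ac matrix_mult_outer
  by (simp add: matrix_vector_mul_assoc scaleR_matrix_vector_mult outer_scaleR)

lemma tf_perturb_C:
  "tf E A B (C + t *\<^sub>R outer u v) s
     = tf E A B C s + t *\<^sub>R outer (cvec u) (cvec v v* (matrix_inv (pencil s E A) ** cmat B))"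
  unfolding tf_def cmat_add_scaleR cmat_outer matrix_add_rdistrib
  by (simp add: outer_mult_matrix matrix_mul_assoc vector_matrix_mul_assoc flip: scalar_matrix_assoc)

lemma tf_perturb_A:
  fixes E A :: "real^'r^'r" and u v :: "real^'r" and s :: complex and t :: real
  defines "K \<equiv> matrix_inv (pencil s E A)"
    and "\<alpha> \<equiv> (\<Sum>j\<in>UNIV. cvec v $ j * (matrix_inv (pencil s E A) *v cvec u) $ j)"
  assumes inv: "invertible (pencil s E A)" and small: "complex_of_real t * \<alpha> \<noteq> 1"
  shows "invertible (pencil s E (A + t *\<^sub>R outer u v))"
    and "tf E (A + t *\<^sub>R outer u v) B C s = tf E A B C s
           + t *\<^sub>R outer ((1 / (1 - complex_of_real t * \<alpha>)) *s (cmat C ** K *v cvec u))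
                         (cvec v v* (K ** cmat B))"
proof -
  define K' where "K' = K + outer ((1 / (1 - complex_of_real t * \<alpha>)) *s (K *v (t *\<^sub>R cvec u)))
      (cvec v v* K)"
  have pencil': "pencil s E (A + t *\<^sub>R outer u v)
      = pencil s E A - outer (t *\<^sub>R cvec u) (cvec v)"
    by (simp add: pencil_def cmat_def outer_def cvec_def vec_eq_iff
        scaleR_conv_of_real[where 'a=complex] algebra_simps)
  have Ktu: "K *v (t *\<^sub>R cvec u) = t *\<^sub>R (K *v cvec u)"
    by (simp add: scaleR_complex_vec vector_scalar_commute)
  have "(\<Sum>j\<in>UNIV. cvec v $ j * (K *v (t *\<^sub>R cvec u)) $ j) = complex_of_real t * \<alpha>"
    unfolding \<alpha>_def K_def[symmetric] Ktu
    by (simp add: scaleR_conv_of_real[where 'a=complex] sum_distrib_left mult_ac)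
  then have "pencil s E (A + t *\<^sub>R outer u v) ** K' = mat 1"
    using sherman_morrison[OF matrix_inv_right[OF inv], where x="t *\<^sub>R cvec u" and w="cvec v"]
      small
    by (simp add: pencil' K'_def K_def)
  then show "invertible (pencil s E (A + t *\<^sub>R outer u v))"
    using invertible_right_inverse by blast
  have inv': "matrix_inv (pencil s E (A + t *\<^sub>R outer u v)) = K'"
    using \<open>_ ** K' = mat 1\<close> by (rule matrix_inv_eq_right_inverse)
  have "cmat C *v ((1 / (1 - complex_of_real t * \<alpha>)) *s (K *v (t *\<^sub>R cvec u)))
      = t *\<^sub>R ((1 / (1 - complex_of_real t * \<alpha>)) *s (cmat C ** K *v cvec u))"
    by (simp add: Ktu scaleR_complex_vec vector_scalar_commute matrix_vector_mul_assoc
        vector_smult_assoc mult.commute)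
  then show "tf E (A + t *\<^sub>R outer u v) B C s = tf E A B C s
           + t *\<^sub>R outer ((1 / (1 - complex_of_real t * \<alpha>)) *s (cmat C ** K *v cvec u))
                         (cvec v v* (K ** cmat B))"
    unfolding tf_def inv' K'_def matrix_add_ldistrib matrix_add_rdistrib matrix_mult_outer
    by (simp add: K_def outer_mult_matrix outer_scaleR vector_matrix_mul_assoc
        flip: scalar_matrix_assoc)
qed

section \<open>First-order conditions at a local minimum\<close>

lemma linear_term_eq_0_if_local_min:
  fixes g h :: "real \<Rightarrow> real"
  assumes le: "eventually (\<lambda>t. 2 * t * g t \<le> t\<^sup>2 * h t) (at 0)"
    and g: "(g \<longlongrightarrow> g 0) (at 0)" and h: "(h \<longlongrightarrow> l) (at 0)"
  shows "g 0 = 0"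
proof -
  have lim_g: "((\<lambda>t. 2 * g t) \<longlongrightarrow> 2 * g 0) F" and lim_h: "((\<lambda>t. t * h t) \<longlongrightarrow> 0) F"
    if "F \<le> at 0" for F
  proof -
    have "((\<lambda>t. t * h t) \<longlongrightarrow> 0 * l) (at 0)"
      by (intro tendsto_intros h)
    then show "((\<lambda>t. t * h t) \<longlongrightarrow> 0) F"
      using that by (auto intro: tendsto_mono)
    show "((\<lambda>t. 2 * g t) \<longlongrightarrow> 2 * g 0) F"
      using g that by (auto intro!: tendsto_intros intro: tendsto_mono)
  qed
  have at_left_neg: "eventually (\<lambda>t. t < 0) (at_left (0::real))"
    by (simp add: eventually_at_filter)
  from le have le_left: "eventually (\<lambda>t. 2 * t * g t \<le> t\<^sup>2 * h t) (at_left 0)"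
    and le_right: "eventually (\<lambda>t. 2 * t * g t \<le> t\<^sup>2 * h t) (at_right 0)"
    unfolding eventually_at_split by blast+
  have "eventually (\<lambda>t. 2 * g t \<le> t * h t) (at_right 0)"
    using le_right eventually_at_right_less
  proof eventually_elim
    case (elim t)
    then show ?case
      by (simp add: power2_eq_square mult.assoc)
  qed
  then have "2 * g 0 \<le> 0"
    using tendsto_le[OF trivial_limit_at_right_real lim_h[of "at_right 0"] lim_g[of "at_right 0"]]
    by (simp add: at_within_le_at)
  moreover have "eventually (\<lambda>t. t * h t \<le> 2 * g t) (at_left 0)"
    using le_left at_left_neg
  proof eventually_elim
    case (elim t)
    then show ?case
      by (simp add: power2_eq_square mult.assoc mult_le_cancel_left)
  qed
  then have "0 \<le> 2 * g 0"
    using tendsto_le[OF trivial_limit_at_left_real lim_g[of "at_left 0"] lim_h[of "at_left 0"]]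
    by (simp add: at_within_le_at)
  ultimately show ?thesis
    by simp
qed

locale lsq_local_min =
  fixes N :: nat and \<omega> \<rho> :: "nat \<Rightarrow> real" and Hd :: "nat \<Rightarrow> complex^'ni^'no"
    and E A :: "real^'r^'r" and B :: "real^'ni^'r" and C :: "real^'r^'no"
  assumes distinct_freq: "inj_on \<omega> {..<N}"
    and conj_closed: "\<forall>k<N. \<exists>l<N. \<omega> l = - \<omega> k \<and> Hd l = cmconj (Hd k)"
    and rho_sym: "\<forall>k<N. \<forall>l<N. \<omega> l = - \<omega> k \<longrightarrow> \<rho> l = \<rho> k"
    and adm: "admissible N \<omega> E A"
    and locmin: "\<exists>\<epsilon>>0. \<forall>E' A' B' C'.
                   admissible N \<omega> E' A' \<and> dist (E', A', B', C') (E, A, B, C) < \<epsilon> \<longrightarrow>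
                   lsq_obj N \<rho> \<omega> Hd E A B C \<le> lsq_obj N \<rho> \<omega> Hd E' A' B' C'"
begin

definition sample :: "nat \<Rightarrow> complex" where
  "sample i = \<i> * complex_of_real (\<omega> i)"

definition resolvent :: "nat \<Rightarrow> complex^'r^'r" where
  "resolvent i = matrix_inv (pencil (sample i) E A)"

definition residual :: "nat \<Rightarrow> complex^'ni^'no" where
  "residual i = Hd i - tf E A B C (sample i)"

definition conj_index :: "nat \<Rightarrow> nat" where
  "conj_index k = (SOME l. l < N \<and> \<omega> l = - \<omega> k \<and> Hd l = cmconj (Hd k))"

text \<open>
  For real u, w, the real part of variation_form P Q u w is -1/2 times the derivative of J along
  a rank-one perturbation t u w^T: of B for P i = C K_i and Q i = I, of C for P i = I and
  Q i = K_i B, and of A for P i = C K_i and Q i = K_i B, where K_i is the resolvent.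
\<close>

definition variation_form ::
    "(nat \<Rightarrow> complex^'a^'no) \<Rightarrow> (nat \<Rightarrow> complex^'ni^'b) \<Rightarrow> complex^'a \<Rightarrow> complex^'b \<Rightarrow> complex"
  where "variation_form P Q u w =
    (\<Sum>i<N. complex_of_real (\<rho> i) * frob_inner (residual i) (outer (P i *v u) (w v* Q i)))"

lemma pencil_sample_invertible: "i < N \<Longrightarrow> invertible (pencil (sample i) E A)"
  using adm by (simp add: admissible_def sample_def)

lemma conj_index:
  assumes "i < N"
  shows "conj_index i < N" and "\<omega> (conj_index i) = - \<omega> i"
    and "Hd (conj_index i) = cmconj (Hd i)"
  using someI_ex[OF conj_closed[rule_format, OF assms]] unfolding conj_index_def by blast+

lemma conj_index_conj_index: "i < N \<Longrightarrow> conj_index (conj_index i) = i"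
  using conj_index distinct_freq by (metis inj_onD lessThan_iff minus_minus)

lemma rho_conj_index: "i < N \<Longrightarrow> \<rho> (conj_index i) = \<rho> i"
  using conj_index rho_sym by blast

lemma sample_conj_index: "i < N \<Longrightarrow> sample (conj_index i) = cnj (sample i)"
  by (simp add: sample_def conj_index)

lemma resolvent_conj_index: "i < N \<Longrightarrow> resolvent (conj_index i) = cmconj (resolvent i)"
  by (simp add: resolvent_def sample_conj_index pencil_cnj cmconj_matrix_inv
      pencil_sample_invertible)

lemma residual_conj_index: "i < N \<Longrightarrow> residual (conj_index i) = cmconj (residual i)"
  by (simp add: residual_def sample_conj_index conj_index tf_cnj pencil_sample_invertible
      cmconj_diff)

lemma lsq_obj_residual: "lsq_obj N \<rho> \<omega> Hd E A B C = (\<Sum>i<N. \<rho> i * frob2 (residual i))"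
  by (simp add: lsq_obj_def residual_def sample_def)

lemma eventually_objective_ge:
  assumes "((\<lambda>t. (E' t, A' t, B' t, C' t)) \<longlongrightarrow> (E, A, B, C)) (at 0)"
    and "eventually (\<lambda>t. admissible N \<omega> (E' t) (A' t)) (at 0)"
  shows "eventually (\<lambda>t::real.
           lsq_obj N \<rho> \<omega> Hd E A B C \<le> lsq_obj N \<rho> \<omega> Hd (E' t) (A' t) (B' t) (C' t)) (at 0)"
proof -
  obtain \<epsilon> where "\<epsilon> > 0" and min: "\<And>E' A' B' C'. admissible N \<omega> E' A' \<Longrightarrow>
      dist (E', A', B', C') (E, A, B, C) < \<epsilon> \<Longrightarrow>
      lsq_obj N \<rho> \<omega> Hd E A B C \<le> lsq_obj N \<rho> \<omega> Hd E' A' B' C'"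
    using locmin by blast
  have "eventually (\<lambda>t. dist (E' t, A' t, B' t, C' t) (E, A, B, C) < \<epsilon>) (at 0)"
    using assms(1) \<open>\<epsilon> > 0\<close> by (rule tendstoD)
  with assms(2) show ?thesis
    by eventually_elim (use min in blast)
qed

lemma first_variation_eq_0:
  fixes Q :: "nat \<Rightarrow> real \<Rightarrow> complex^'ni^'no"
  assumes path: "((\<lambda>t. (E' t, A' t, B' t, C' t)) \<longlongrightarrow> (E, A, B, C)) (at 0)"
    and adm': "eventually (\<lambda>t. admissible N \<omega> (E' t) (A' t)) (at 0)"
    and tf': "eventually (\<lambda>t. \<forall>i<N. tf (E' t) (A' t) (B' t) (C' t) (sample i)
                                     = tf E A B C (sample i) + t *\<^sub>R Q i t) (at 0)"
    and cont: "\<And>i. i < N \<Longrightarrow> (Q i \<longlongrightarrow> Q i 0) (at 0)"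
  shows "(\<Sum>i<N. \<rho> i * Re (frob_inner (residual i) (Q i 0))) = 0"
proof -
  define g where "g t = (\<Sum>i<N. \<rho> i * Re (frob_inner (residual i) (Q i t)))" for t
  define h where "h t = (\<Sum>i<N. \<rho> i * frob2 (Q i t))" for t
  have "eventually (\<lambda>t. 2 * t * g t \<le> t\<^sup>2 * h t) (at 0)"
    using eventually_objective_ge[OF path adm'] tf'
  proof eventually_elim
    case (elim t)
    have "lsq_obj N \<rho> \<omega> Hd (E' t) (A' t) (B' t) (C' t)
        = (\<Sum>i<N. \<rho> i * frob2 (residual i - t *\<^sub>R Q i t))"
      unfolding lsq_obj_def using elim(2)
      by (intro sum.cong) (simp_all add: residual_def sample_def algebra_simps)
    also have "\<dots> = lsq_obj N \<rho> \<omega> Hd E A B C - 2 * t * g t + t\<^sup>2 * h t"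
      by (simp add: lsq_obj_residual frob2_diff_scaleR g_def h_def sum.distrib sum_subtractf
          sum_distrib_left algebra_simps)
    finally show ?case
      using elim(1) by simp
  qed
  moreover have "(g \<longlongrightarrow> g 0) (at 0)"
    unfolding g_def frob_inner_def using cont by (auto intro!: tendsto_intros)
  moreover have "(h \<longlongrightarrow> h 0) (at 0)"
    unfolding h_def frob2_def using cont by (auto intro!: tendsto_intros)
  ultimately have "g 0 = 0"
    by (rule linear_term_eq_0_if_local_min)
  then show ?thesis
    by (simp add: g_def)
qed

lemma variation_form_add_smult_left:
  "variation_form P Q (u1 + c *s u2) w = variation_form P Q u1 w + c * variation_form P Q u2 w"
  by (simp add: variation_form_def matrix_vector_right_distrib vector_scalar_commute outer_add_left
      frob_inner_add frob_inner_outer_smult_left sum.distrib sum_distrib_left algebra_simps)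

lemma variation_form_add_smult_right:
  "variation_form P Q u (w1 + c *s w2) = variation_form P Q u w1 + c * variation_form P Q u w2"
  by (simp add: variation_form_def vector_matrix_left_distrib scalar_vector_matrix_assoc
      outer_add_right frob_inner_add frob_inner_outer_smult_right sum.distrib sum_distrib_left
      algebra_simps)

lemma variation_form_eq_0:
  assumes re: "\<And>u v. Re (variation_form P Q (cvec u) (cvec v)) = 0"
    and P: "\<And>i. i < N \<Longrightarrow> P (conj_index i) = cmconj (P i)"
    and Q: "\<And>i. i < N \<Longrightarrow> Q (conj_index i) = cmconj (Q i)"
  shows "variation_form P Q u w = 0"
proof -
  have real: "cnj (variation_form P Q (cvec u) (cvec v)) = variation_form P Q (cvec u) (cvec v)"
    for u v
  proof -
    define f where
      "f i = complex_of_real (\<rho> i) * frob_inner (residual i) (outer (P i *v cvec u) (cvec v v* Q i))"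
      for i
    have "cnj (variation_form P Q (cvec u) (cvec v)) = (\<Sum>i<N. f (conj_index i))"
      unfolding variation_form_def f_def cnj_sum
      by (intro sum.cong refl) (simp add: cnj_frob_inner cmconj_outer cvconj_matrix_vector_mult
          cvconj_vector_matrix_mult P Q rho_conj_index residual_conj_index)
    also have "\<dots> = (\<Sum>i<N. f i)"
      by (rule sum.reindex_bij_witness[where i=conj_index and j=conj_index])
        (auto simp: conj_index conj_index_conj_index)
    finally show ?thesis
      by (simp add: variation_form_def f_def)
  qed
  have real_zero: "variation_form P Q (cvec u) (cvec v) = 0" for u v
    using real[of u v] re[of u v] by (simp add: complex_eq_iff)
  have re_im_split: "z = cvec (\<chi> a. Re (z$a)) + \<i> *s cvec (\<chi> a. Im (z$a))" for z :: "complex^'k"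
    by (simp add: vec_eq_iff cvec_def complex_eq_iff)
  show ?thesis
    by (subst re_im_split[of u], subst re_im_split[of w])
      (simp add: variation_form_add_smult_left variation_form_add_smult_right real_zero)
qed

lemma variation_form_B_eq_0: "variation_form (\<lambda>i. cmat C ** resolvent i) (\<lambda>i. mat 1) u w = 0"
proof (rule variation_form_eq_0)
  fix u :: "real^'r" and v :: "real^'ni"
  define Q where "Q i (t::real) = outer (cmat C ** resolvent i *v cvec u) (cvec v)" for i t
  have "(\<Sum>i<N. \<rho> i * Re (frob_inner (residual i) (Q i 0))) = 0"
  proof (rule first_variation_eq_0[where E'="\<lambda>_. E" and A'="\<lambda>_. A" and C'="\<lambda>_. C"
        and B'="\<lambda>t. B + t *\<^sub>R outer u v"])
    show "((\<lambda>t. (E, A, B + t *\<^sub>R outer u v, C)) \<longlongrightarrow> (E, A, B, C)) (at 0)"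
      by (auto intro!: tendsto_eq_intros)
  qed (simp_all add: adm tf_perturb_B Q_def resolvent_def)
  then show "Re (variation_form (\<lambda>i. cmat C ** resolvent i) (\<lambda>i. mat 1) (cvec u) (cvec v)) = 0"
    by (simp add: variation_form_def Q_def)
qed (simp_all add: resolvent_conj_index cmconj_mult)

lemma variation_form_C_eq_0: "variation_form (\<lambda>i. mat 1) (\<lambda>i. resolvent i ** cmat B) u w = 0"
proof (rule variation_form_eq_0)
  fix u :: "real^'no" and v :: "real^'r"
  define Q where "Q i (t::real) = outer (cvec u) (cvec v v* (resolvent i ** cmat B))" for i t
  have "(\<Sum>i<N. \<rho> i * Re (frob_inner (residual i) (Q i 0))) = 0"
  proof (rule first_variation_eq_0[where E'="\<lambda>_. E" and A'="\<lambda>_. A" and B'="\<lambda>_. B"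
        and C'="\<lambda>t. C + t *\<^sub>R outer u v"])
    show "((\<lambda>t. (E, A, B, C + t *\<^sub>R outer u v)) \<longlongrightarrow> (E, A, B, C)) (at 0)"
      by (auto intro!: tendsto_eq_intros)
  qed (simp_all add: adm tf_perturb_C Q_def resolvent_def)
  then show "Re (variation_form (\<lambda>i. mat 1) (\<lambda>i. resolvent i ** cmat B) (cvec u) (cvec v)) = 0"
    by (simp add: variation_form_def Q_def)
qed (simp_all add: resolvent_conj_index cmconj_mult)

lemma variation_form_A_eq_0:
  "variation_form (\<lambda>i. cmat C ** resolvent i) (\<lambda>i. resolvent i ** cmat B) u w = 0"
proof (rule variation_form_eq_0)
  fix u v :: "real^'r"
  define \<alpha> where "\<alpha> i = (\<Sum>j\<in>UNIV. cvec v $ j * (resolvent i *v cvec u) $ j)" for i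
  define Q where "Q i (t::real) = outer ((1 / (1 - complex_of_real t * \<alpha> i)) *s
                    (cmat C ** resolvent i *v cvec u)) (cvec v v* (resolvent i ** cmat B))" for i t
  have small: "eventually (\<lambda>t. \<forall>i\<in>{..<N}. complex_of_real t * \<alpha> i \<noteq> 1) (at 0)"
  proof (rule eventually_ball_finite[OF finite_lessThan], rule ballI)
    fix i
    have "((\<lambda>t. complex_of_real t * \<alpha> i) \<longlongrightarrow> complex_of_real 0 * \<alpha> i) (at 0)"
      by (intro tendsto_intros)
    then show "eventually (\<lambda>t. complex_of_real t * \<alpha> i \<noteq> 1) (at 0)"
      by (rule tendsto_imp_eventually_ne) simp
  qed
  have "(\<Sum>i<N. \<rho> i * Re (frob_inner (residual i) (Q i 0))) = 0"
  proof (rule first_variation_eq_0[where E'="\<lambda>_. E" and A'="\<lambda>t. A + t *\<^sub>R outer u v"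
        and B'="\<lambda>_. B" and C'="\<lambda>_. C"])
    show "((\<lambda>t. (E, A + t *\<^sub>R outer u v, B, C)) \<longlongrightarrow> (E, A, B, C)) (at 0)"
      by (auto intro!: tendsto_eq_intros)
    show "eventually (\<lambda>t. admissible N \<omega> E (A + t *\<^sub>R outer u v)) (at 0)"
      using small
    proof eventually_elim
      case (elim t)
      then show ?case
        using adm tf_perturb_A(1)[OF pencil_sample_invertible]
        by (auto simp: admissible_def sample_def \<alpha>_def resolvent_def)
    qed
    show "eventually (\<lambda>t. \<forall>i<N. tf E (A + t *\<^sub>R outer u v) B C (sample i)
                               = tf E A B C (sample i) + t *\<^sub>R Q i t) (at 0)"
      using small
      by eventually_elim
        (simp add: tf_perturb_A(2)[OF pencil_sample_invertible] Q_def \<alpha>_def resolvent_def)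
    show "(Q i \<longlongrightarrow> Q i 0) (at 0)" for i
      unfolding Q_def outer_def vector_smult_component by (intro tendsto_eq_intros) auto
  qed
  then show "Re (variation_form (\<lambda>i. cmat C ** resolvent i) (\<lambda>i. resolvent i ** cmat B)
                 (cvec u) (cvec v)) = 0"
    by (simp add: variation_form_def Q_def)
qed (simp_all add: resolvent_conj_index cmconj_mult)

section \<open>Interpolation conditions\<close>

lemma resolvent_right_eigenvector:
  assumes "i < N" and eig: "cmat A *v x = \<mu> *s (cmat E *v x)" and "x \<noteq> 0"
  shows "resolvent i *v (cmat E *v x) = (1 / (sample i - \<mu>)) *s x"
proof -
  have "pencil (sample i) E A *v x = (sample i - \<mu>) *s (cmat E *v x)"
    by (simp add: pencil_mult_vector eig vec_eq_iff algebra_simps)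
  then show ?thesis
    unfolding resolvent_def
    using matrix_inv_mult_vector_eigen pencil_sample_invertible assms(1,3) by blast
qed

lemma resolvent_left_eigenvector:
  assumes "i < N" and eig: "y v* cmat A = \<mu> *s (y v* cmat E)" and "y \<noteq> 0"
  shows "(y v* cmat E) v* resolvent i = (1 / (sample i - \<mu>)) *s y"
proof -
  have "y v* pencil (sample i) E A = (sample i - \<mu>) *s (y v* cmat E)"
    by (simp add: vector_mult_pencil eig vec_eq_iff algebra_simps)
  then show ?thesis
    unfolding resolvent_def
    using vector_mult_matrix_inv_eigen pencil_sample_invertible assms(1,3) by blast
qed

lemma right_tangential_interpolation:
  fixes y :: "complex^'r"
  assumes eig: "cvconj y v* cmat A = \<mu> *s (cvconj y v* cmat E)" and "cvconj y \<noteq> 0"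
  defines "b \<equiv> transpose (cmat B) *v y"
  shows "(\<Sum>i<N. (complex_of_real (\<rho> i) / (- \<i> * complex_of_real (\<omega> i) - cnj \<mu>)) *s (Hd i *v b))
       = (\<Sum>i<N. (complex_of_real (\<rho> i) / (- \<i> * complex_of_real (\<omega> i) - cnj \<mu>))
                  *s (tf E A B C (\<i> * complex_of_real (\<omega> i)) *v b))"
proof -
  define wt where "wt i = complex_of_real (\<rho> i) / (- \<i> * complex_of_real (\<omega> i) - cnj \<mu>)" for i
  have "cnj ((\<Sum>i<N. wt i *s (residual i *v b)) $ j)
      = variation_form (\<lambda>i. mat 1) (\<lambda>i. resolvent i ** cmat B) (axis j 1) (cvconj y v* cmat E)" for j
    unfolding variation_form_def sum_component cnj_sum
  proof (intro sum.cong refl)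
    fix i
    assume "i \<in> {..<N}"
    then have "(cvconj y v* cmat E) v* (resolvent i ** cmat B) = (1 / (sample i - \<mu>)) *s cvconj b"
      using resolvent_left_eigenvector[OF _ eig \<open>cvconj y \<noteq> 0\<close>]
      by (simp add: b_def cvconj_vector_matrix_mult scalar_vector_matrix_assoc
          flip: vector_matrix_mul_assoc)
    then show "cnj ((wt i *s (residual i *v b)) $ j) = complex_of_real (\<rho> i)
        * frob_inner (residual i)
            (outer (mat 1 *v axis j 1) ((cvconj y v* cmat E) v* (resolvent i ** cmat B)))"
      by (simp add: wt_def sample_def frob_inner_outer_axis_left)
  qed
  then have "(\<Sum>i<N. wt i *s (residual i *v b)) $ j = 0" for j
    by (simp only: variation_form_C_eq_0 complex_cnj_zero_iff)
  then have "(\<Sum>i<N. wt i *s (residual i *v b)) = 0"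
    by (simp add: vec_eq_iff)
  then show ?thesis
    by (simp add: wt_def residual_def sample_def matrix_vector_mult_diff_rdistrib vector_ssub_ldistrib
        sum_subtractf)
qed

lemma left_tangential_interpolation:
  fixes x :: "complex^'r"
  assumes eig: "cmat A *v x = \<mu> *s (cmat E *v x)" and "x \<noteq> 0"
  defines "c \<equiv> cmat C *v x"
  shows "(\<Sum>i<N. (complex_of_real (\<rho> i) / (- \<i> * complex_of_real (\<omega> i) - cnj \<mu>))
                  *s (cvconj c v* Hd i))
       = (\<Sum>i<N. (complex_of_real (\<rho> i) / (- \<i> * complex_of_real (\<omega> i) - cnj \<mu>))
                  *s (cvconj c v* tf E A B C (\<i> * complex_of_real (\<omega> i))))"
proof -
  define wt where "wt i = complex_of_real (\<rho> i) / (- \<i> * complex_of_real (\<omega> i) - cnj \<mu>)" for i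
  have "cnj ((\<Sum>i<N. wt i *s (cvconj c v* residual i)) $ j)
      = variation_form (\<lambda>i. cmat C ** resolvent i) (\<lambda>i. mat 1) (cmat E *v x) (axis j 1)" for j
    unfolding variation_form_def sum_component cnj_sum
  proof (intro sum.cong refl)
    fix i
    assume "i \<in> {..<N}"
    then have "(cmat C ** resolvent i) *v (cmat E *v x) = (1 / (sample i - \<mu>)) *s c"
      using resolvent_right_eigenvector[OF _ eig \<open>x \<noteq> 0\<close>]
      by (simp add: c_def vector_scalar_commute flip: matrix_vector_mul_assoc)
    then show "cnj ((wt i *s (cvconj c v* residual i)) $ j) = complex_of_real (\<rho> i)
        * frob_inner (residual i)
            (outer ((cmat C ** resolvent i) *v (cmat E *v x)) (axis j 1 v* mat 1))"
      by (simp add: wt_def sample_def frob_inner_outer_axis_right)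
  qed
  then have "(\<Sum>i<N. wt i *s (cvconj c v* residual i)) $ j = 0" for j
    by (simp only: variation_form_B_eq_0 complex_cnj_zero_iff)
  then have "(\<Sum>i<N. wt i *s (cvconj c v* residual i)) = 0"
    by (simp add: vec_eq_iff)
  then show ?thesis
    by (simp add: wt_def residual_def sample_def vector_matrix_mult_diff_rdistrib vector_ssub_ldistrib
        sum_subtractf)
qed

lemma bitangential_hermite_interpolation:
  fixes x y :: "complex^'r"
  assumes right: "cmat A *v x = \<mu> *s (cmat E *v x)" and "x \<noteq> 0"
    and left: "cvconj y v* cmat A = \<mu> *s (cvconj y v* cmat E)" and "cvconj y \<noteq> 0"
  defines "c \<equiv> cmat C *v x" and "b \<equiv> transpose (cmat B) *v y"
  shows "(\<Sum>i<N. complex_of_real (\<rho> i) * cdot c (Hd i *v b)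
                  / (- \<i> * complex_of_real (\<omega> i) - cnj \<mu>)\<^sup>2)
       = (\<Sum>i<N. complex_of_real (\<rho> i) * cdot c (tf E A B C (\<i> * complex_of_real (\<omega> i)) *v b)
                  / (- \<i> * complex_of_real (\<omega> i) - cnj \<mu>)\<^sup>2)"
proof -
  have "cnj (\<Sum>i<N. complex_of_real (\<rho> i) * cdot c (residual i *v b)
                     / (- \<i> * complex_of_real (\<omega> i) - cnj \<mu>)\<^sup>2)
      = variation_form (\<lambda>i. cmat C ** resolvent i) (\<lambda>i. resolvent i ** cmat B)
          (cmat E *v x) (cvconj y v* cmat E)"
    unfolding variation_form_def cnj_sum
  proof (intro sum.cong refl)
    fix i
    assume "i \<in> {..<N}"
    then have "(cmat C ** resolvent i) *v (cmat E *v x) = (1 / (sample i - \<mu>)) *s c"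
      and "(cvconj y v* cmat E) v* (resolvent i ** cmat B) = (1 / (sample i - \<mu>)) *s cvconj b"
      using resolvent_right_eigenvector[OF _ right \<open>x \<noteq> 0\<close>]
        resolvent_left_eigenvector[OF _ left \<open>cvconj y \<noteq> 0\<close>]
      by (simp_all add: c_def b_def vector_scalar_commute cvconj_vector_matrix_mult
          scalar_vector_matrix_assoc flip: matrix_vector_mul_assoc vector_matrix_mul_assoc)
    then show "cnj (complex_of_real (\<rho> i) * cdot c (residual i *v b)
                    / (- \<i> * complex_of_real (\<omega> i) - cnj \<mu>)\<^sup>2)
        = complex_of_real (\<rho> i) * frob_inner (residual i)
            (outer ((cmat C ** resolvent i) *v (cmat E *v x))
                   ((cvconj y v* cmat E) v* (resolvent i ** cmat B)))"
      by (simp add: sample_def frob_inner_outer power2_eq_square)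
  qed
  then have "(\<Sum>i<N. complex_of_real (\<rho> i) * cdot c (residual i *v b)
                 / (- \<i> * complex_of_real (\<omega> i) - cnj \<mu>)\<^sup>2) = 0"
    by (simp only: variation_form_A_eq_0 complex_cnj_zero_iff)
  then show ?thesis
    by (simp add: residual_def sample_def matrix_vector_mult_diff_rdistrib cdot_def
        sum_subtractf right_diff_distrib diff_divide_distrib)
qed

end

theorem theorem4p1:
  fixes N :: nat
    and \<omega> :: "nat \<Rightarrow> real" and \<rho> :: "nat \<Rightarrow> real"
    and Hd :: "nat \<Rightarrow> complex^'ni^'no"
    and E A :: "real^'r^'r" and B :: "real^'ni^'r" and C :: "real^'r^'no"
    and T S :: "complex^'r^'r" and lam :: "'r \<Rightarrow> complex"
  assumes distinct_freq: "inj_on \<omega> {..<N}"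
    and conj_closed: "\<forall>k<N. \<exists>l<N. \<omega> l = - \<omega> k \<and> Hd l = cmconj (Hd k)"
    and rho_pos: "\<forall>i<N. \<rho> i > 0"
    and rho_sym: "\<forall>k<N. \<forall>l<N. \<omega> l = - \<omega> k \<longrightarrow> \<rho> l = \<rho> k"
    and T_inv: "invertible T" and S_inv: "invertible S"
    and SET: "ctrans S ** cmat E ** T = mat 1"
    and SAT: "ctrans S ** cmat A ** T = (\<chi> i j. if i = j then lam i else 0)"
    and poles_distinct: "inj lam"
    and adm: "admissible N \<omega> E A"
    and locmin: "\<exists>\<epsilon>>0. \<forall>E' A' B' C'.
                   admissible N \<omega> E' A' \<and> dist (E', A', B', C') (E, A, B, C) < \<epsilon> \<longrightarrow>
                   lsq_obj N \<rho> \<omega> Hd E A B C \<le> lsq_obj N \<rho> \<omega> Hd E' A' B' C'"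
  shows "\<forall>k.
     let c = cmat C *v column k T;
         b = transpose (cmat B) *v column k S;
         Hh = tf E A B C;
         d = (\<lambda>i. - \<i> * complex_of_real (\<omega> i) - cnj (lam k))
     in (\<Sum>i<N. (complex_of_real (\<rho> i) / d i) *s (Hd i *v b))
          = (\<Sum>i<N. (complex_of_real (\<rho> i) / d i) *s (Hh (\<i> * complex_of_real (\<omega> i)) *v b))
      \<and> (\<Sum>i<N. (complex_of_real (\<rho> i) / d i) *s (cvconj c v* Hd i))
          = (\<Sum>i<N. (complex_of_real (\<rho> i) / d i) *s (cvconj c v* Hh (\<i> * complex_of_real (\<omega> i))))
      \<and> (\<Sum>i<N. complex_of_real (\<rho> i) * cdot c (Hd i *v b) / (d i)\<^sup>2)
          = (\<Sum>i<N. complex_of_real (\<rho> i) * cdot c (Hh (\<i> * complex_of_real (\<omega> i)) *v b) / (d i)\<^sup>2)"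
proof -
  interpret lsq_local_min N \<omega> \<rho> Hd E A B C
    by (unfold_locales; fact)
  note eigenvectors = simultaneous_diagonalization_eigenvectors[OF SET SAT, unfolded ctrans_nth]
  show ?thesis
    unfolding Let_def
    using right_tangential_interpolation[OF eigenvectors(2,4)]
      left_tangential_interpolation[OF eigenvectors(1,3)]
      bitangential_hermite_interpolation[OF eigenvectors(1,3) eigenvectors(2,4)]
    by blast
qed

end
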